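(* Let $m \ge 1$ and let $Z_1,\dots,Z_{m+1}$ be a finitely exchangeable sequence of Bernoulli random variables. Let $S_m = \sum_{i=1}^m Z_i$ and $S_{m+1} = \sum_{i=1}^{m+1} Z_i$. If $S_m$ is not uniformly distributed on $\{0,1,\dots,m\}$, then $S_{m+1}$ is not uniformly distributed on $\{0,1,\dots,m+1\}$.
   Context: Finitely exchangeable means the joint distribution of $(Z_1,\dots,Z_{m+1})$ is invariant under permutations of the indices. *)

theory Defs
  imports "HOL-Probability.Probability"
begin

definition joint_distr :: "'a measure \<Rightarrow> (nat \<Rightarrow> 'a \<Rightarrow> nat) \<Rightarrow> nat \<Rightarrow> (nat \<Rightarrow> nat) measure" where
  "joint_distr M Z n = distr M (PiM {..n} (\<lambda>_. count_space UNIV)) (\<lambda>\<omega>. \<lambda>i\<in>{..n}. Z i \<omega>)"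

definition finitely_exchangeable :: "'a measure \<Rightarrow> (nat \<Rightarrow> 'a \<Rightarrow> nat) \<Rightarrow> nat \<Rightarrow> bool" where
  "finitely_exchangeable M Z n \<longleftrightarrow>
     (\<forall>\<sigma>. \<sigma> permutes {..n} \<longrightarrow> joint_distr M (\<lambda>i. Z (\<sigma> i)) n = joint_distr M Z n)"

definition uniform_on_upto :: "'a measure \<Rightarrow> ('a \<Rightarrow> nat) \<Rightarrow> nat \<Rightarrow> bool" where
  "uniform_on_upto M S k \<longleftrightarrow>
     (\<forall>j\<in>{0..k}. measure M {\<omega>\<in>space M. S \<omega> = j} = 1 / real (k + 1))"

end

theory Submission
  imports Defs
begin

text \<open>Write \<open>S\<close> for the sum of all \<open>m + 1\<close> variables. By exchangeability each
  \<open>P(S = k, Z\<^sub>i = 1)\<close> is the same, and summing over \<open>i\<close> gives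
  \<open>k P(S = k)\<close>; hence \<open>P(S = k, Z\<^sub>m = 1) = k P(S = k) / (m + 1)\<close>.
  Removing the last variable, \<open>P(S - Z\<^sub>m = k) = P(S = k) - P(S = k, Z\<^sub>m = 1)
  + P(S = k + 1, Z\<^sub>m = 1)\<close>, so if \<open>S\<close> is uniform on \<open>{0..m+1}\<close> this equals
  \<open>(1 + 1/(m + 1)) / (m + 2) = 1/(m + 1)\<close>: the partial sum is uniform too.\<close>

context prob_space
begin

lemma measurable_joint_vector:
  fixes Z :: "nat \<Rightarrow> 'a \<Rightarrow> nat"
  assumes "\<And>i. i \<le> n \<Longrightarrow> Z i \<in> M \<rightarrow>\<^sub>M count_space UNIV"
  shows "(\<lambda>\<omega>. \<lambda>i\<in>{..n}. Z i \<omega>) \<in> M \<rightarrow>\<^sub>M PiM {..n} (\<lambda>_. count_space UNIV)"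
  using assms by (intro measurable_restrict) auto

lemma finitely_exchangeable_prob_vimage:
  fixes Z :: "nat \<Rightarrow> 'a \<Rightarrow> nat"
  assumes meas: "\<And>i. i \<le> n \<Longrightarrow> Z i \<in> M \<rightarrow>\<^sub>M count_space UNIV"
    and exch: "finitely_exchangeable M Z n"
    and \<sigma>: "\<sigma> permutes {..n}"
    and A: "A \<in> sets (PiM {..n} (\<lambda>_. count_space UNIV))"
  shows "prob ((\<lambda>\<omega>. \<lambda>i\<in>{..n}. Z (\<sigma> i) \<omega>) -` A \<inter> space M)
       = prob ((\<lambda>\<omega>. \<lambda>i\<in>{..n}. Z i \<omega>) -` A \<inter> space M)"
proof -
  have meas_\<sigma>: "Z (\<sigma> i) \<in> M \<rightarrow>\<^sub>M count_space UNIV" if "i \<le> n" for i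
    using meas permutes_in_image[OF \<sigma>] that by auto
  have "joint_distr M (\<lambda>i. Z (\<sigma> i)) n = joint_distr M Z n"
    using exch \<sigma> unfolding finitely_exchangeable_def by blast
  then show ?thesis
    using measure_distr[OF measurable_joint_vector[of n "\<lambda>i. Z (\<sigma> i)", OF meas_\<sigma>] A]
      measure_distr[OF measurable_joint_vector[of n Z, OF meas] A]
    unfolding joint_distr_def by simp
qed

lemma finitely_exchangeable_prob_sum_and_coord:
  fixes Z :: "nat \<Rightarrow> 'a \<Rightarrow> nat"
  assumes meas: "\<And>i. i \<le> n \<Longrightarrow> Z i \<in> M \<rightarrow>\<^sub>M count_space UNIV"
    and exch: "finitely_exchangeable M Z n"
    and "i \<le> n"
  shows "prob {\<omega>\<in>space M. (\<Sum>j\<le>n. Z j \<omega>) = k \<and> Z i \<omega> = 1}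
       = prob {\<omega>\<in>space M. (\<Sum>j\<le>n. Z j \<omega>) = k \<and> Z n \<omega> = 1}"
proof -
  define \<sigma> where "\<sigma> = Transposition.transpose i n"
  have \<sigma>: "\<sigma> permutes {..n}"
    unfolding \<sigma>_def using \<open>i \<le> n\<close> by (intro permutes_swap_id) auto
  define A where
    "A = {x \<in> space (PiM {..n} (\<lambda>_. count_space UNIV)). (\<Sum>j\<le>n. x j) = k \<and> x n = (1::nat)}"
  have A: "A \<in> sets (PiM {..n} (\<lambda>_. count_space UNIV))"
    unfolding A_def by measurable
  have sum_\<sigma>: "(\<Sum>j\<le>n. Z (\<sigma> j) \<omega>) = (\<Sum>j\<le>n. Z j \<omega>)" for \<omega>
    using sum.permute[OF \<sigma>, of "\<lambda>j. Z j \<omega>"] by (simp add: comp_def)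
  have "(\<lambda>\<omega>. \<lambda>j\<in>{..n}. Z (\<sigma> j) \<omega>) -` A \<inter> space M
      = {\<omega>\<in>space M. (\<Sum>j\<le>n. Z j \<omega>) = k \<and> Z i \<omega> = 1}"
    using sum_\<sigma> by (auto simp: A_def \<sigma>_def space_PiM)
  moreover have "(\<lambda>\<omega>. \<lambda>j\<in>{..n}. Z j \<omega>) -` A \<inter> space M
      = {\<omega>\<in>space M. (\<Sum>j\<le>n. Z j \<omega>) = k \<and> Z n \<omega> = 1}"
    by (auto simp: A_def space_PiM)
  ultimately show ?thesis
    using finitely_exchangeable_prob_vimage[OF meas exch \<sigma> A] by simp
qed

lemma sum_prob_sum_and_coord:
  fixes Z :: "nat \<Rightarrow> 'a \<Rightarrow> nat"
  assumes meas: "\<And>i. i \<le> n \<Longrightarrow> Z i \<in> M \<rightarrow>\<^sub>M count_space UNIV"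
    and binary: "\<And>i \<omega>. i \<le> n \<Longrightarrow> \<omega> \<in> space M \<Longrightarrow> Z i \<omega> \<in> {0, 1}"
  shows "(\<Sum>i\<le>n. prob {\<omega>\<in>space M. (\<Sum>j\<le>n. Z j \<omega>) = k \<and> Z i \<omega> = 1})
       = real k * prob {\<omega>\<in>space M. (\<Sum>j\<le>n. Z j \<omega>) = k}"
proof -
  let ?S = "\<lambda>\<omega>. \<Sum>j\<le>n. Z j \<omega>"
  let ?E = "\<lambda>i. {\<omega>\<in>space M. ?S \<omega> = k \<and> Z i \<omega> = 1}"
  let ?P = "{\<omega>\<in>space M. ?S \<omega> = k}"
  have E: "?E i \<in> events" if "i \<le> n" for i
    using meas that by measurable
  have P: "?P \<in> events"
    using meas by measurable
  have indicator_E: "indicator (?E i) \<omega> = real (Z i \<omega>) * indicator ?P \<omega>"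
    if "i \<le> n" "\<omega> \<in> space M" for i \<omega>
    using binary[OF that] that(2) by (auto simp: indicator_def)
  have "(\<Sum>i\<le>n. prob (?E i)) = (\<Sum>i\<le>n. expectation (indicator (?E i)))"
    using E by simp
  also have "\<dots> = expectation (\<lambda>\<omega>. \<Sum>i\<le>n. indicator (?E i) \<omega>)"
    using E by (intro Bochner_Integration.integral_sum[symmetric] integrable_real_indicator)
      (auto simp: less_top[symmetric])
  also have "\<dots> = expectation (\<lambda>\<omega>. real k * indicator ?P \<omega>)"
  proof (rule Bochner_Integration.integral_cong[OF refl])
    fix \<omega> assume "\<omega> \<in> space M"
    then have "(\<Sum>i\<le>n. indicator (?E i) \<omega>) = (\<Sum>i\<le>n. real (Z i \<omega>) * indicator ?P \<omega>)"
      by (intro sum.cong refl indicator_E) auto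
    also have "\<dots> = real (?S \<omega>) * indicator ?P \<omega>"
      by (simp add: sum_distrib_right)
    also have "\<dots> = real k * indicator ?P \<omega>"
      by (simp add: indicator_def flip: of_nat_sum)
    finally show "(\<Sum>i\<le>n. indicator (?E i) \<omega>) = real k * indicator ?P \<omega>" .
  qed
  also have "\<dots> = real k * prob ?P"
    using P by simp
  finally show ?thesis .
qed

lemma finitely_exchangeable_prob_sum_and_last:
  fixes Z :: "nat \<Rightarrow> 'a \<Rightarrow> nat"
  assumes meas: "\<And>i. i \<le> n \<Longrightarrow> Z i \<in> M \<rightarrow>\<^sub>M count_space UNIV"
    and binary: "\<And>i \<omega>. i \<le> n \<Longrightarrow> \<omega> \<in> space M \<Longrightarrow> Z i \<omega> \<in> {0, 1}"
    and exch: "finitely_exchangeable M Z n"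
  shows "real (n + 1) * prob {\<omega>\<in>space M. (\<Sum>j\<le>n. Z j \<omega>) = k \<and> Z n \<omega> = 1}
       = real k * prob {\<omega>\<in>space M. (\<Sum>j\<le>n. Z j \<omega>) = k}"
proof -
  have "(\<Sum>i\<le>n. prob {\<omega>\<in>space M. (\<Sum>j\<le>n. Z j \<omega>) = k \<and> Z i \<omega> = 1})
      = (\<Sum>i\<le>n. prob {\<omega>\<in>space M. (\<Sum>j\<le>n. Z j \<omega>) = k \<and> Z n \<omega> = 1})"
    by (intro sum.cong refl finitely_exchangeable_prob_sum_and_coord[OF meas exch]) auto
  then show ?thesis
    using sum_prob_sum_and_coord[of n Z k, OF meas binary] by simp
qed

lemma prob_partial_sum_eq:
  fixes Z :: "nat \<Rightarrow> 'a \<Rightarrow> nat"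
  assumes meas: "\<And>i. i \<le> n \<Longrightarrow> Z i \<in> M \<rightarrow>\<^sub>M count_space UNIV"
    and binary: "\<And>\<omega>. \<omega> \<in> space M \<Longrightarrow> Z n \<omega> \<in> {0, 1}"
  shows "prob {\<omega>\<in>space M. (\<Sum>j<n. Z j \<omega>) = k}
       = prob {\<omega>\<in>space M. (\<Sum>j\<le>n. Z j \<omega>) = k}
         - prob {\<omega>\<in>space M. (\<Sum>j\<le>n. Z j \<omega>) = k \<and> Z n \<omega> = 1}
         + prob {\<omega>\<in>space M. (\<Sum>j\<le>n. Z j \<omega>) = Suc k \<and> Z n \<omega> = 1}"
proof -
  let ?S = "\<lambda>\<omega>. \<Sum>j\<le>n. Z j \<omega>"
  let ?P = "{\<omega>\<in>space M. ?S \<omega> = k}"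
  let ?E = "\<lambda>l. {\<omega>\<in>space M. ?S \<omega> = l \<and> Z n \<omega> = 1}"
  have P: "?P \<in> events"
    using meas by measurable
  have E: "?E l \<in> events" for l
    using meas meas[of n, OF order.refl] by measurable
  have S_eq: "?S \<omega> = (\<Sum>j<n. Z j \<omega>) + Z n \<omega>" for \<omega>
    by (simp add: lessThan_Suc_atMost[symmetric])
  have "{\<omega>\<in>space M. (\<Sum>j<n. Z j \<omega>) = k} = (?P - ?E k) \<union> ?E (Suc k)"
    using binary by (auto simp: S_eq; fastforce)
  then have "prob {\<omega>\<in>space M. (\<Sum>j<n. Z j \<omega>) = k} = prob (?P - ?E k) + prob (?E (Suc k))"
    using P E by (simp add: finite_measure_Union disjoint_iff)
  also have "prob (?P - ?E k) = prob ?P - prob (?E k)"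
    using P E by (intro finite_measure_Diff) auto
  finally show ?thesis .
qed

lemma finitely_exchangeable_uniform_partial_sum:
  fixes Z :: "nat \<Rightarrow> 'a \<Rightarrow> nat"
  assumes meas: "\<And>i. i \<le> n \<Longrightarrow> Z i \<in> M \<rightarrow>\<^sub>M count_space UNIV"
    and binary: "\<And>i \<omega>. i \<le> n \<Longrightarrow> \<omega> \<in> space M \<Longrightarrow> Z i \<omega> \<in> {0, 1}"
    and exch: "finitely_exchangeable M Z n"
    and uniform: "uniform_on_upto M (\<lambda>\<omega>. \<Sum>i\<le>n. Z i \<omega>) (n + 1)"
  shows "uniform_on_upto M (\<lambda>\<omega>. \<Sum>i<n. Z i \<omega>) n"
  unfolding uniform_on_upto_def
proof
  fix k assume k: "k \<in> {0..n}"
  let ?p = "1 / real (n + 2)"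
  have P: "prob {\<omega>\<in>space M. (\<Sum>j\<le>n. Z j \<omega>) = l} = ?p" if "l \<le> n + 1" for l
    using uniform that unfolding uniform_on_upto_def by simp
  have E: "prob {\<omega>\<in>space M. (\<Sum>j\<le>n. Z j \<omega>) = l \<and> Z n \<omega> = 1} = real l * ?p / real (n + 1)"
    if "l \<le> n + 1" for l
  proof -
    have "real (n + 1) * prob {\<omega>\<in>space M. (\<Sum>j\<le>n. Z j \<omega>) = l \<and> Z n \<omega> = 1} = real l * ?p"
      using finitely_exchangeable_prob_sum_and_last[OF meas binary exch, of l] P[OF that] by simp
    then show ?thesis
      by (simp add: eq_divide_eq ac_simps del: of_nat_Suc)
  qed
  have "prob {\<omega>\<in>space M. (\<Sum>j<n. Z j \<omega>) = k}
      = ?p - real k * ?p / real (n + 1) + real (Suc k) * ?p / real (n + 1)"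
    using prob_partial_sum_eq[of n Z k, OF meas binary[OF order.refl]] P E k by simp
  also have "\<dots> = ?p + ?p / real (n + 1)"
    by (simp add: algebra_simps diff_divide_distrib add_divide_distrib)
  also have "\<dots> = 1 / real (n + 1)"
    by (simp add: divide_simps del: of_nat_Suc)
  finally show "prob {\<omega>\<in>space M. (\<Sum>j<n. Z j \<omega>) = k} = 1 / real (n + 1)" .
qed

end

theorem lemmaA8:
  fixes M :: "'a measure" and Z :: "nat \<Rightarrow> 'a \<Rightarrow> nat" and m :: nat
  assumes "prob_space M"
    and "m \<ge> 1"
    and "\<And>i. i \<le> m \<Longrightarrow> Z i \<in> measurable M (count_space UNIV)"
    and "\<And>i \<omega>. i \<le> m \<Longrightarrow> \<omega> \<in> space M \<Longrightarrow> Z i \<omega> \<in> {0, 1}"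
    and "finitely_exchangeable M Z m"
    and "\<not> uniform_on_upto M (\<lambda>\<omega>. \<Sum>i<m. Z i \<omega>) m"
  shows "\<not> uniform_on_upto M (\<lambda>\<omega>. \<Sum>i\<le>m. Z i \<omega>) (m + 1)"
  using prob_space.finitely_exchangeable_uniform_partial_sum[OF assms(1) assms(3-5)] assms(6) by blast

end
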